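(* Let $\mathcal{X} \subseteq \mathbb{R}^m$ be countable with ground metric $d$, and let $\widehat\nu = \sum_{j=1}^N \widehat\nu_j \delta_{\widehat x_j}$ be a probability mass function supported on $N$ distinct points $\widehat x_1,\dots,\widehat x_N \in \mathcal{X}$ with $\widehat\nu_j > 0$ and $\sum_j \widehat\nu_j = 1$. For $\varepsilon \ge 0$ let $\mathbb{B}_{\mathbb{W}}(\widehat\nu,\varepsilon) = \{\nu \in \mathcal{M}(\mathcal{X}) : \mathbb{W}(\nu,\widehat\nu) \le \varepsilon\}$. Then for any $\varepsilon \ge 0$ and $x \in \mathcal{X}$ there exists $\nu^\star_{\mathbb{W}} \in \mathbb{B}_{\mathbb{W}}(\widehat\nu,\varepsilon)$ with $$\sup_{\nu \in \mathbb{B}_{\mathbb{W}}(\widehat\nu,\varepsilon)} \nu(x) = \nu^\star_{\mathbb{W}}(x).$$ Furthermore, $\nu^\star_{\mathbb{W}}$ is supported on at most $N+1$ points and satisfies $\mathrm{supp}(\nu^\star_{\mathbb{W}}) \subseteq \mathrm{supp}(\widehat\nu) \cup \{x\}$.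
   Context: $\mathcal{M}(\mathcal{X})$ is the set of probability mass functions supported on $\mathcal{X}$. The type-1 Wasserstein distance between $\nu_1,\nu_2 \in \mathcal{M}(\mathcal{X})$ is $\mathbb{W}(\nu_1,\nu_2) = \inf_{\lambda \in \Lambda(\nu_1,\nu_2)} \mathbb{E}_\lambda[d(x_1,x_2)]$, where $\Lambda(\nu_1,\nu_2)$ is the set of distributions on $\mathcal{X}\times\mathcal{X}$ with marginals $\nu_1$ and $\nu_2$, and $d$ is the ground metric on $\mathcal{X}$. *)

theory Defs
  imports "HOL-Analysis.Analysis" "HOL-Probability.Probability"
begin

definition metric_on :: "'a set \<Rightarrow> ('a \<Rightarrow> 'a \<Rightarrow> real) \<Rightarrow> bool" where
  "metric_on X d \<longleftrightarrow>
     (\<forall>x\<in>X. \<forall>y\<in>X. d x y \<ge> 0 \<and> (d x y = 0 \<longleftrightarrow> x = y) \<and> d x y = d y x) \<and>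
     (\<forall>x\<in>X. \<forall>y\<in>X. \<forall>z\<in>X. d x z \<le> d x y + d y z)"

definition pmfs_on :: "'a set \<Rightarrow> 'a pmf set" where
  "pmfs_on X = {\<nu>. set_pmf \<nu> \<subseteq> X}"

definition couplings :: "'a pmf \<Rightarrow> 'a pmf \<Rightarrow> ('a \<times> 'a) pmf set" where
  "couplings \<nu>1 \<nu>2 = {\<gamma>. map_pmf fst \<gamma> = \<nu>1 \<and> map_pmf snd \<gamma> = \<nu>2}"

definition wasserstein :: "('a \<Rightarrow> 'a \<Rightarrow> real) \<Rightarrow> 'a pmf \<Rightarrow> 'a pmf \<Rightarrow> ennreal" where
  "wasserstein d \<nu>1 \<nu>2 =
     (INF \<gamma>\<in>couplings \<nu>1 \<nu>2. \<integral>\<^sup>+ p. ennreal (d (fst p) (snd p)) \<partial>measure_pmf \<gamma>)"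

definition wball :: "'a set \<Rightarrow> ('a \<Rightarrow> 'a \<Rightarrow> real) \<Rightarrow> 'a pmf \<Rightarrow> real \<Rightarrow> 'a pmf set" where
  "wball X d \<nu>hat \<epsilon> = {\<nu> \<in> pmfs_on X. wasserstein d \<nu> \<nu>hat \<le> ennreal \<epsilon>}"

end

theory Submission
  imports Defs
begin

text \<open>
  For \<nu> in the ball and a coupling \<gamma> of \<nu> and \<nu>hat, the masses t y = \<gamma>(x, y) satisfy
  0 \<le> t y \<le> \<nu>hat(y) and \<Sum> t y d(x, y) \<le> cost(\<gamma>), and \<nu>(x) = \<Sum> t y. Conversely every such t
  is realised by moving the mass t y from each atom y of \<nu>hat to x. Hence the supremum is the
  value of a fractional knapsack problem over the finite set supp \<nu>hat, which is attained by
  compactness, and the distribution realising an optimal t is supported in supp \<nu>hat \<union> {x}.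
  As we do not use that the Wasserstein infimum is attained, a coupling only gives feasibility
  for the budget \<epsilon> + \<delta>; shrinking such a point to budget \<epsilon> loses at most \<delta> \<Sum> 1 / d(x, y), the sum
  over the y \<noteq> x.
\<close>

definition knapsack_feasible :: "'a set \<Rightarrow> ('a \<Rightarrow> real) \<Rightarrow> ('a \<Rightarrow> real) \<Rightarrow> real \<Rightarrow> ('a \<Rightarrow> real) \<Rightarrow> bool" where
  "knapsack_feasible S w D e t \<longleftrightarrow> (\<forall>y\<in>S. 0 \<le> t y \<and> t y \<le> w y) \<and> (\<Sum>y\<in>S. t y * D y) \<le> e"

lemma knapsack_optimum_exists:
  fixes w D :: "'a \<Rightarrow> real"
  assumes "finite S" and "\<forall>y\<in>S. 0 \<le> w y" and "0 \<le> e"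
  obtains t where "knapsack_feasible S w D e t"
    and "\<And>s. knapsack_feasible S w D e s \<Longrightarrow> (\<Sum>y\<in>S. s y) \<le> (\<Sum>y\<in>S. t y)"
proof -
  let ?T = "product_topology (\<lambda>_. euclideanreal) S"
  define F where "F = {t \<in> topspace ?T. (\<Sum>y\<in>S. t y * D y) \<in> {..e}} \<inter> (\<Pi>\<^sub>E y\<in>S. {0..w y})"
  have "closedin ?T {t \<in> topspace ?T. (\<Sum>y\<in>S. t y * D y) \<in> {..e}}"
    by (intro closedin_continuous_map_preimage[where Y = euclideanreal] continuous_intros) (auto simp: assms(1))
  moreover have "compactin ?T (\<Pi>\<^sub>E y\<in>S. {0..w y})"
    by (simp add: compactin_PiE)
  ultimately have "compactin ?T F"
    unfolding F_def by (rule closed_Int_compactin)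
  moreover have "continuous_map ?T euclideanreal (\<lambda>t. \<Sum>y\<in>S. t y)"
    by (intro continuous_intros) (auto simp: assms(1))
  ultimately have "compact ((\<lambda>t. \<Sum>y\<in>S. t y) ` F)"
    using image_compactin compactin_euclidean_iff by blast
  moreover have "restrict (\<lambda>_. 0) S \<in> F"
    using assms(2,3) by (auto simp: F_def)
  ultimately obtain t where t: "t \<in> F" and max: "\<And>s. s \<in> F \<Longrightarrow> (\<Sum>y\<in>S. s y) \<le> (\<Sum>y\<in>S. t y)"
    using compact_attains_sup[of "(\<lambda>t. \<Sum>y\<in>S. t y) ` F"] by blast
  show thesis
  proof
    show "knapsack_feasible S w D e t"
      using t by (auto simp: F_def knapsack_feasible_def)
  next
    fix s assume "knapsack_feasible S w D e s"
    then have "restrict s S \<in> F"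
      by (auto simp: F_def knapsack_feasible_def)
    then show "(\<Sum>y\<in>S. s y) \<le> (\<Sum>y\<in>S. t y)"
      using max[of "restrict s S"] by simp
  qed
qed

lemma knapsack_budget_relaxation:
  fixes w D t :: "'a \<Rightarrow> real"
  assumes "finite S" and "\<forall>y\<in>S. 0 \<le> D y" and "0 \<le> e" and "0 < \<delta>"
    and "knapsack_feasible S w D (e + \<delta>) t"
  obtains s where "knapsack_feasible S w D e s"
    and "(\<Sum>y\<in>S. t y) \<le> (\<Sum>y\<in>S. s y) + \<delta> * (\<Sum>y\<in>S. inverse (D y))"
  \<comment> \<open>inverse 0 = 0: the points with D y = 0 are not shrunk and add nothing to the bound\<close>
proof -
  define \<theta> where "\<theta> = e / (e + \<delta>)"
  have \<theta>: "0 \<le> \<theta>" "\<theta> \<le> 1" "\<theta> * (e + \<delta>) = e" "(1 - \<theta>) * (e + \<delta>) = \<delta>"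
    unfolding \<theta>_def using assms(3,4) by (auto simp: field_simps)
  define s where "s y = (if D y = 0 then t y else \<theta> * t y)" for y
  have t: "\<forall>y\<in>S. 0 \<le> t y \<and> t y \<le> w y" and cost: "(\<Sum>y\<in>S. t y * D y) \<le> e + \<delta>"
    using assms(5) by (auto simp: knapsack_feasible_def)
  show thesis
  proof
    have "(\<Sum>y\<in>S. s y * D y) = \<theta> * (\<Sum>y\<in>S. t y * D y)"
      unfolding sum_distrib_left by (intro sum.cong) (auto simp: s_def)
    also have "\<dots> \<le> e"
      using mult_left_mono[OF cost \<open>0 \<le> \<theta>\<close>] \<theta>(3) by simp
    finally show "knapsack_feasible S w D e s"
      using t \<theta>(1,2) by (auto simp: knapsack_feasible_def s_def intro: order_trans[OF mult_left_le_one_le])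
  next
    have "t y - s y \<le> \<delta> * inverse (D y)" if y: "y \<in> S" for y
    proof (cases "D y = 0")
      case False
      then have "0 < D y" using assms(2) y by force
      have "t y * D y \<le> (\<Sum>y\<in>S. t y * D y)"
        using y t assms(1,2) by (intro member_le_sum) auto
      then have "(1 - \<theta>) * (t y * D y) \<le> \<delta>"
        using mult_left_mono[of "t y * D y" "e + \<delta>" "1 - \<theta>"] cost \<theta>(2,4) by simp
      then show ?thesis
        using False \<open>0 < D y\<close> by (simp add: s_def field_simps)
    qed (simp add: s_def)
    then have "(\<Sum>y\<in>S. t y - s y) \<le> \<delta> * (\<Sum>y\<in>S. inverse (D y))"
      by (simp add: sum_distrib_left sum_mono)
    then show "(\<Sum>y\<in>S. t y) \<le> (\<Sum>y\<in>S. s y) + \<delta> * (\<Sum>y\<in>S. inverse (D y))"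
      by (simp add: sum_subtractf)
  qed
qed

lemma le_knapsack_optimum_of_relaxations:
  fixes w D t :: "'a \<Rightarrow> real"
  assumes "finite S" and "\<forall>y\<in>S. 0 \<le> D y" and "0 \<le> e"
    and opt: "\<And>s. knapsack_feasible S w D e s \<Longrightarrow> (\<Sum>y\<in>S. s y) \<le> (\<Sum>y\<in>S. t y)"
    and relax: "\<And>\<delta>. 0 < \<delta> \<Longrightarrow> \<exists>r. knapsack_feasible S w D (e + \<delta>) r \<and> v \<le> (\<Sum>y\<in>S. r y)"
  shows "v \<le> (\<Sum>y\<in>S. t y)"
proof (rule field_le_epsilon)
  fix \<eta> :: real assume "0 < \<eta>"
  define K where "K = (\<Sum>y\<in>S. inverse (D y))"
  have "0 \<le> K" unfolding K_def using assms(2) by (intro sum_nonneg) auto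
  define \<delta> where "\<delta> = \<eta> / (K + 1)"
  have "0 < \<delta>" and "\<delta> * K \<le> \<eta>"
    unfolding \<delta>_def using \<open>0 < \<eta>\<close> \<open>0 \<le> K\<close> by (auto simp: field_simps)
  obtain r where r: "knapsack_feasible S w D (e + \<delta>) r" and "v \<le> (\<Sum>y\<in>S. r y)"
    using relax[OF \<open>0 < \<delta>\<close>] by blast
  moreover obtain s where "knapsack_feasible S w D e s" and "(\<Sum>y\<in>S. r y) \<le> (\<Sum>y\<in>S. s y) + \<delta> * K"
    using knapsack_budget_relaxation[OF assms(1-3) \<open>0 < \<delta>\<close> r] unfolding K_def .
  ultimately show "v \<le> (\<Sum>y\<in>S. t y) + \<eta>"
    using opt \<open>\<delta> * K \<le> \<eta>\<close> by fastforce
qed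

lemma pmf_fst_marginal_eq_sum:
  assumes "finite (set_pmf (map_pmf snd \<gamma>))"
  shows "pmf (map_pmf fst \<gamma>) x = (\<Sum>y\<in>set_pmf (map_pmf snd \<gamma>). pmf \<gamma> (x, y))"
proof -
  let ?S = "set_pmf (map_pmf snd \<gamma>)"
  have "fst -` {x} \<inter> set_pmf \<gamma> = Pair x ` ?S \<inter> set_pmf \<gamma>"
    by force
  then have "measure \<gamma> (fst -` {x}) = measure \<gamma> (Pair x ` ?S)"
    by (metis measure_Int_set_pmf)
  also have "\<dots> = (\<Sum>y\<in>?S. pmf \<gamma> (x, y))"
    using assms by (simp add: measure_measure_pmf_finite sum.reindex inj_on_def)
  finally show ?thesis
    by (simp add: pmf_map)
qed

lemma pmf_le_pmf_map: "pmf p a \<le> pmf (map_pmf f p) (f a)"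
proof -
  have "measure p {a} \<le> measure p (f -` {f a})"
    by (intro measure_pmf.finite_measure_mono) auto
  then show ?thesis
    by (simp add: measure_pmf_single pmf_map)
qed

lemma sum_row_le_nn_integral:
  fixes c :: "'a \<Rightarrow> 'a \<Rightarrow> real"
  assumes "finite S"
  shows "(\<Sum>y\<in>S. ennreal (c x y) * ennreal (pmf \<gamma> (x, y)))
    \<le> (\<integral>\<^sup>+ q. ennreal (c (fst q) (snd q)) \<partial>measure_pmf \<gamma>)"
proof -
  let ?A = "Pair x ` S"
  have "(\<Sum>y\<in>S. ennreal (c x y) * ennreal (pmf \<gamma> (x, y)))
      = (\<Sum>q\<in>?A. ennreal (c (fst q) (snd q)) * indicator ?A q * pmf \<gamma> q)"
    by (simp add: sum.reindex inj_on_def)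
  also have "\<dots> = (\<integral>\<^sup>+ q. ennreal (c (fst q) (snd q)) * indicator ?A q \<partial>measure_pmf \<gamma>)"
    using assms by (intro nn_integral_measure_pmf_support[symmetric]) auto
  also have "\<dots> \<le> (\<integral>\<^sup>+ q. ennreal (c (fst q) (snd q)) \<partial>measure_pmf \<gamma>)"
    by (intro nn_integral_mono) (auto split: split_indicator)
  finally show ?thesis .
qed

lemma coupling_row_knapsack_feasible:
  fixes d :: "'a \<Rightarrow> 'a \<Rightarrow> real"
  assumes "finite (set_pmf \<nu>)" and "map_pmf snd \<gamma> = \<nu>" and "\<forall>y\<in>set_pmf \<nu>. 0 \<le> d x y"
    and "(\<integral>\<^sup>+ q. ennreal (d (fst q) (snd q)) \<partial>measure_pmf \<gamma>) \<le> ennreal c" and "0 \<le> c"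
  shows "knapsack_feasible (set_pmf \<nu>) (pmf \<nu>) (d x) c (\<lambda>y. pmf \<gamma> (x, y))"
proof -
  have "ennreal (\<Sum>y\<in>set_pmf \<nu>. pmf \<gamma> (x, y) * d x y)
      = (\<Sum>y\<in>set_pmf \<nu>. ennreal (d x y) * ennreal (pmf \<gamma> (x, y)))"
    using assms(3) by (simp add: sum_ennreal[symmetric] ennreal_mult' mult.commute)
  also have "\<dots> \<le> ennreal c"
    using sum_row_le_nn_integral[OF assms(1)] assms(4) by (rule order_trans)
  finally show ?thesis
    using assms(2,5) pmf_le_pmf_map[of \<gamma> "(x, _)" snd] by (auto simp: knapsack_feasible_def)
qed

lemma pmf_in_wball_le_knapsack_optimum:
  fixes d :: "'a \<Rightarrow> 'a \<Rightarrow> real"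
  assumes "finite (set_pmf \<nu>hat)" and "\<forall>y\<in>set_pmf \<nu>hat. 0 \<le> d x y" and "0 \<le> \<epsilon>"
    and opt: "\<And>s. knapsack_feasible (set_pmf \<nu>hat) (pmf \<nu>hat) (d x) \<epsilon> s
                \<Longrightarrow> (\<Sum>y\<in>set_pmf \<nu>hat. s y) \<le> (\<Sum>y\<in>set_pmf \<nu>hat. t y)"
    and "\<nu> \<in> wball X d \<nu>hat \<epsilon>"
  shows "pmf \<nu> x \<le> (\<Sum>y\<in>set_pmf \<nu>hat. t y)"
proof (rule le_knapsack_optimum_of_relaxations[OF assms(1-3) opt])
  fix \<delta> :: real assume "0 < \<delta>"
  have "wasserstein d \<nu> \<nu>hat < ennreal (\<epsilon> + \<delta>)"
    using assms(3,5) \<open>0 < \<delta>\<close> by (auto simp: wball_def ennreal_less_iff intro: le_less_trans)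
  then obtain \<gamma> where \<gamma>: "\<gamma> \<in> couplings \<nu> \<nu>hat"
    and cost: "(\<integral>\<^sup>+ q. ennreal (d (fst q) (snd q)) \<partial>measure_pmf \<gamma>) \<le> ennreal (\<epsilon> + \<delta>)"
    unfolding wasserstein_def by (auto simp: INF_less_iff less_imp_le)
  have "knapsack_feasible (set_pmf \<nu>hat) (pmf \<nu>hat) (d x) (\<epsilon> + \<delta>) (\<lambda>y. pmf \<gamma> (x, y))"
    using \<gamma> assms(1-3) \<open>0 < \<delta>\<close> by (intro coupling_row_knapsack_feasible cost) (auto simp: couplings_def)
  moreover have "pmf \<nu> x = (\<Sum>y\<in>set_pmf \<nu>hat. pmf \<gamma> (x, y))"
    using \<gamma> assms(1) pmf_fst_marginal_eq_sum[of \<gamma> x] by (auto simp: couplings_def)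
  ultimately show "\<exists>r. knapsack_feasible (set_pmf \<nu>hat) (pmf \<nu>hat) (d x) (\<epsilon> + \<delta>) r
                     \<and> pmf \<nu> x \<le> (\<Sum>y\<in>set_pmf \<nu>hat. r y)"
    by auto
qed

text \<open>Pairs are (destination, origin): the atom y keeps its mass except for the fraction
  t y / \<nu> y, which is sent to x.\<close>
definition move_mass_to :: "'a \<Rightarrow> 'a pmf \<Rightarrow> ('a \<Rightarrow> real) \<Rightarrow> ('a \<times> 'a) pmf" where
  "move_mass_to x \<nu> t =
     bind_pmf \<nu> (\<lambda>y. map_pmf (\<lambda>b. (if b then x else y, y)) (bernoulli_pmf (t y / pmf \<nu> y)))"

lemma map_snd_move_mass_to: "map_pmf snd (move_mass_to x \<nu> t) = \<nu>"
  by (simp add: move_mass_to_def map_bind_pmf map_pmf_comp bind_return_pmf')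

lemma set_pmf_map_fst_move_mass_to: "set_pmf (map_pmf fst (move_mass_to x \<nu> t)) \<subseteq> set_pmf \<nu> \<union> {x}"
  by (auto simp: move_mass_to_def)

lemma move_mass_to_cost:
  fixes c :: "'a \<Rightarrow> 'a \<Rightarrow> real"
  assumes "finite (set_pmf \<nu>)" and t: "\<forall>y\<in>set_pmf \<nu>. 0 \<le> t y \<and> t y \<le> pmf \<nu> y"
    and c: "\<forall>y\<in>set_pmf \<nu>. c y y = 0 \<and> 0 \<le> c x y"
  shows "(\<integral>\<^sup>+ q. ennreal (c (fst q) (snd q)) \<partial>measure_pmf (move_mass_to x \<nu> t))
    = ennreal (\<Sum>y\<in>set_pmf \<nu>. t y * c x y)"
proof -
  let ?p = "\<lambda>y. t y / pmf \<nu> y"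
  have "(\<integral>\<^sup>+ q. ennreal (c (fst q) (snd q)) \<partial>measure_pmf (move_mass_to x \<nu> t))
      = (\<integral>\<^sup>+ y. (\<integral>\<^sup>+ b. ennreal (c (if b then x else y) y) \<partial>bernoulli_pmf (?p y)) \<partial>measure_pmf \<nu>)"
    by (simp add: move_mass_to_def)
  also have "\<dots> = (\<Sum>y\<in>set_pmf \<nu>. (\<integral>\<^sup>+ b. ennreal (c (if b then x else y) y) \<partial>bernoulli_pmf (?p y)) * pmf \<nu> y)"
    using assms(1) by (intro nn_integral_measure_pmf_finite) auto
  also have "\<dots> = (\<Sum>y\<in>set_pmf \<nu>. ennreal (t y * c x y))"
  proof (intro sum.cong refl)
    fix y assume y: "y \<in> set_pmf \<nu>"
    then have "0 < pmf \<nu> y" by (simp add: pmf_positive)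
    then have "0 \<le> ?p y" "?p y \<le> 1"
      using t y by auto
    then show "(\<integral>\<^sup>+ b. ennreal (c (if b then x else y) y) \<partial>bernoulli_pmf (?p y)) * pmf \<nu> y
        = ennreal (t y * c x y)"
      using c y \<open>0 < pmf \<nu> y\<close>
      by (simp add: ennreal_mult''[symmetric] ennreal_mult[symmetric]) (simp add: mult.commute)
  qed
  also have "\<dots> = ennreal (\<Sum>y\<in>set_pmf \<nu>. t y * c x y)"
    using t c by (intro sum_ennreal) auto
  finally show ?thesis .
qed

lemma sum_le_pmf_move_mass_to:
  assumes "finite (set_pmf \<nu>)" and t: "\<forall>y\<in>set_pmf \<nu>. 0 \<le> t y \<and> t y \<le> pmf \<nu> y"
  shows "(\<Sum>y\<in>set_pmf \<nu>. t y) \<le> pmf (map_pmf fst (move_mass_to x \<nu> t)) x"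
proof -
  define g where "g = (\<lambda>y. map_pmf (\<lambda>b. if b then x else y) (bernoulli_pmf (t y / pmf \<nu> y)))"
  have "map_pmf fst (move_mass_to x \<nu> t) = bind_pmf \<nu> g"
    by (simp add: move_mass_to_def g_def map_bind_pmf map_pmf_comp)
  then have "pmf (map_pmf fst (move_mass_to x \<nu> t)) x = (\<Sum>y\<in>set_pmf \<nu>. pmf \<nu> y * pmf (g y) x)"
    using assms(1) by (simp add: pmf_bind integral_measure_pmf[of "set_pmf \<nu>"])
  moreover have "t y \<le> pmf \<nu> y * pmf (g y) x" if y: "y \<in> set_pmf \<nu>" for y
  proof -
    have "0 < pmf \<nu> y" using y by (simp add: pmf_positive)
    have "t y / pmf \<nu> y = pmf (bernoulli_pmf (t y / pmf \<nu> y)) True"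
      using t y \<open>0 < pmf \<nu> y\<close> by simp
    also have "\<dots> \<le> pmf (g y) x"
      unfolding g_def using pmf_le_pmf_map[of _ True "\<lambda>b. if b then x else y"] by simp
    finally show ?thesis using \<open>0 < pmf \<nu> y\<close> by (simp add: field_simps)
  qed
  ultimately show ?thesis
    by (simp add: sum_mono)
qed

lemma move_mass_to_in_wball:
  fixes d :: "'a \<Rightarrow> 'a \<Rightarrow> real"
  assumes "metric_on X d" and "\<nu>hat \<in> pmfs_on X" and "finite (set_pmf \<nu>hat)" and "x \<in> X"
    and t: "knapsack_feasible (set_pmf \<nu>hat) (pmf \<nu>hat) (d x) \<epsilon> t"
  shows "map_pmf fst (move_mass_to x \<nu>hat t) \<in> wball X d \<nu>hat \<epsilon>"
proof -
  let ?\<gamma> = "move_mass_to x \<nu>hat t"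
  have "set_pmf \<nu>hat \<subseteq> X"
    using assms(2) by (simp add: pmfs_on_def)
  then have d: "\<forall>y\<in>set_pmf \<nu>hat. d y y = 0 \<and> 0 \<le> d x y"
    using assms(1,4) by (auto simp: metric_on_def)
  have "?\<gamma> \<in> couplings (map_pmf fst ?\<gamma>) \<nu>hat"
    by (simp add: couplings_def map_snd_move_mass_to)
  moreover have "(\<integral>\<^sup>+ q. ennreal (d (fst q) (snd q)) \<partial>measure_pmf ?\<gamma>) \<le> ennreal \<epsilon>"
  proof -
    have "\<forall>y\<in>set_pmf \<nu>hat. 0 \<le> t y \<and> t y \<le> pmf \<nu>hat y" and "(\<Sum>y\<in>set_pmf \<nu>hat. t y * d x y) \<le> \<epsilon>"
      using t by (simp_all add: knapsack_feasible_def)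
    then show ?thesis
      using d assms(3) by (simp add: move_mass_to_cost ennreal_leI)
  qed
  ultimately have "wasserstein d (map_pmf fst ?\<gamma>) \<nu>hat \<le> ennreal \<epsilon>"
    unfolding wasserstein_def by (rule INF_lower2)
  moreover have "set_pmf (map_pmf fst ?\<gamma>) \<subseteq> X"
    using set_pmf_map_fst_move_mass_to[of x \<nu>hat t] \<open>set_pmf \<nu>hat \<subseteq> X\<close> assms(4) by blast
  ultimately show ?thesis
    by (simp add: wball_def pmfs_on_def)
qed

theorem mainTheorem4:
  fixes X :: "(real ^ 'm) set" and d :: "real ^ 'm \<Rightarrow> real ^ 'm \<Rightarrow> real"
    and \<nu>hat :: "(real ^ 'm) pmf" and N :: nat and \<epsilon> :: real and x :: "real ^ 'm"
  assumes "countable X"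
    and "metric_on X d"
    and "\<nu>hat \<in> pmfs_on X"
    and "finite (set_pmf \<nu>hat)" and "card (set_pmf \<nu>hat) = N"
    and "\<epsilon> \<ge> 0"
    and "x \<in> X"
  shows "\<exists>\<nu>s \<in> wball X d \<nu>hat \<epsilon>.
           (SUP \<nu>\<in>wball X d \<nu>hat \<epsilon>. pmf \<nu> x) = pmf \<nu>s x \<and>
           card (set_pmf \<nu>s) \<le> N + 1 \<and>
           set_pmf \<nu>s \<subseteq> set_pmf \<nu>hat \<union> {x}"
proof -
  let ?S = "set_pmf \<nu>hat"
  have dx: "\<forall>y\<in>?S. 0 \<le> d x y"
    using assms(2,3,7) by (auto simp: metric_on_def pmfs_on_def)
  obtain t where t: "knapsack_feasible ?S (pmf \<nu>hat) (d x) \<epsilon> t"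
    and opt: "\<And>s. knapsack_feasible ?S (pmf \<nu>hat) (d x) \<epsilon> s \<Longrightarrow> (\<Sum>y\<in>?S. s y) \<le> (\<Sum>y\<in>?S. t y)"
    using knapsack_optimum_exists[OF assms(4) _ assms(6)] by (metis pmf_nonneg)
  define \<nu>s where "\<nu>s = map_pmf fst (move_mass_to x \<nu>hat t)"
  have in_wball: "\<nu>s \<in> wball X d \<nu>hat \<epsilon>"
    unfolding \<nu>s_def using assms(2-4,7) t by (rule move_mass_to_in_wball)
  have maximal: "pmf \<nu> x \<le> pmf \<nu>s x" if "\<nu> \<in> wball X d \<nu>hat \<epsilon>" for \<nu>
  proof -
    have "pmf \<nu> x \<le> (\<Sum>y\<in>?S. t y)"
      using assms(4) dx assms(6) opt that by (rule pmf_in_wball_le_knapsack_optimum)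
    also have "\<dots> \<le> pmf \<nu>s x"
      unfolding \<nu>s_def using assms(4) t by (intro sum_le_pmf_move_mass_to) (auto simp: knapsack_feasible_def)
    finally show ?thesis .
  qed
  have supp: "set_pmf \<nu>s \<subseteq> ?S \<union> {x}"
    unfolding \<nu>s_def by (rule set_pmf_map_fst_move_mass_to)
  have card: "card (set_pmf \<nu>s) \<le> N + 1"
    using card_mono[OF _ supp] card_Un_le[of ?S "{x}"] assms(4,5) by force
  have "(SUP \<nu>\<in>wball X d \<nu>hat \<epsilon>. pmf \<nu> x) = pmf \<nu>s x"
  proof (rule cSup_eq_maximum)
    show "pmf \<nu>s x \<in> (\<lambda>\<nu>. pmf \<nu> x) ` wball X d \<nu>hat \<epsilon>"
      using in_wball by (rule imageI)
  qed (use maximal in blast)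
  with in_wball supp card show ?thesis
    by blast
qed

end
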